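(* Let $\Sigma$ be a two-letter alphabet and let $w\in\Sigma^*$ be a binary word. If every element of $\mathtt{BR}(w)$ is rich, then $2\le l(w)\le 8$.
   Context: For a word $w=w_1\cdots w_n$, $|w|=n$, $w^R=w_n\cdots w_1$; $w$ is a palindrome if $w=w^R$; a factor of $w$ is a word $u$ with $w=puq$. A word $w$ is rich if the number of distinct nonempty palindromic factors of $w$ equals $|w|$. The block reversal of a nonempty word $w$ is $\mathtt{BR}(w)=\{B_tB_{t-1}\cdots B_1 : w=B_1\cdots B_t,\ t\ge1,\ \text{each } B_i \text{ nonempty}\}$. Every nonempty word has a unique run-length encoding $w=c_1^{n_1}c_2^{n_2}\cdots c_k^{n_k}$ with letters $c_i\neq c_{i+1}$ and $n_i\ge1$; $(n_1,\dots,n_k)$ is the run sequence and $l(w)=k$ is its length. A binary word is a word in which exactly two distinct letters occur. *)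

theory Defs
  imports Main
begin

definition factor :: "'a list \<Rightarrow> 'a list \<Rightarrow> bool" where
  "factor u w \<longleftrightarrow> (\<exists>p q. w = p @ u @ q)"

definition palindrome :: "'a list \<Rightarrow> bool" where
  "palindrome w \<longleftrightarrow> w = rev w"

definition pal_factors :: "'a list \<Rightarrow> 'a list set" where
  "pal_factors w = {u. u \<noteq> [] \<and> palindrome u \<and> factor u w}"

definition rich :: "'a list \<Rightarrow> bool" where
  "rich w \<longleftrightarrow> card (pal_factors w) = length w"

definition block_reversal :: "'a list \<Rightarrow> 'a list set" where
  "block_reversal w = {concat (rev bs) | bs. bs \<noteq> [] \<and> (\<forall>b\<in>set bs. b \<noteq> []) \<and> concat bs = w}"

definition run_length :: "'a list \<Rightarrow> nat" where
  "run_length w = length (remdups_adj w)"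

definition binary_word :: "'a list \<Rightarrow> bool" where
  "binary_word w \<longleftrightarrow> card (set w) = 2"

end

theory Submission
  imports Defs "HOL-Library.Sublist"
begin

(* Appending a letter to a word creates at most one new palindromic factor, namely its longest
   palindromic suffix.  Hence a word has at most as many nonempty palindromic factors as letters,
   and every factor of a rich word is rich.  The word c c d^x c d^z c c with 0 < x, 0 < z and x \<noteq> z
   is not rich, since its last letter creates no new palindrome.  A binary word with at least nine
   runs contains a factor c d^p1 c^q1 d^p2 c^q2 d^p3 c^q3 d^p4 c, and cutting it into at most seven
   blocks, depending on whether q3 = 1 and on the run lengths, puts such a non-rich word into a
   block reversal.  The lower bound only says that both letters occur. *)

section \<open>Palindromic factors\<close>

lemma factor_eq_sublist: "factor = sublist"
  by (auto simp: fun_eq_iff factor_def sublist_def)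

lemma finite_pal_factors: "finite (pal_factors w)"
proof (rule finite_subset)
  show "pal_factors w \<subseteq> set (sublists w)"
    by (auto simp: pal_factors_def factor_eq_sublist)
qed simp

lemma palindrome_suffix_imp_prefix:
  assumes "palindrome v" "palindrome u" "suffix u v"
  shows "prefix u v"
proof -
  obtain r where "v = r @ u" using \<open>suffix u v\<close> by (auto simp: suffix_def)
  then have "v = u @ rev r"
    using assms(1,2) unfolding palindrome_def by (metis rev_append)
  then show ?thesis by simp
qed

(* A new palindrome must be a suffix, and of two palindromic suffixes the shorter one is also a
   prefix of the longer one, so it already occurs before the last letter. *)
lemma pal_factors_snoc_new_unique:
  assumes u: "u \<in> pal_factors (w @ [a]) - pal_factors w"
    and v: "v \<in> pal_factors (w @ [a]) - pal_factors w"
  shows "u = v"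
proof -
  have new_suffix: "suffix s (w @ [a]) \<and> palindrome s \<and> \<not> sublist s w"
    if "s \<in> pal_factors (w @ [a]) - pal_factors w" for s
    using that sublist_snoc[of s w a] by (auto simp: pal_factors_def factor_eq_sublist)
  have "s = t" if s: "s \<in> pal_factors (w @ [a]) - pal_factors w"
    and t: "t \<in> pal_factors (w @ [a]) - pal_factors w" and "suffix s t" for s t
  proof (rule ccontr)
    assume "s \<noteq> t"
    have "prefix s t"
      using palindrome_suffix_imp_prefix new_suffix[OF s] new_suffix[OF t] \<open>suffix s t\<close> by blast
    obtain t' where t': "t = t' @ [a]" "suffix t' w"
      using new_suffix[OF t] t by (auto simp: pal_factors_def)
    have "prefix s t'" using \<open>prefix s t\<close> \<open>s \<noteq> t\<close> t' by simp
    then have "sublist s w"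
      using \<open>suffix t' w\<close> by (meson prefix_imp_sublist suffix_imp_sublist sublist_order.order_trans)
    then show False using new_suffix[OF s] by blast
  qed
  then show ?thesis
    using suffix_same_cases new_suffix[OF u] new_suffix[OF v] u v by metis
qed

lemma card_pal_factors_snoc_le: "card (pal_factors (w @ [a])) \<le> Suc (card (pal_factors w))"
proof -
  let ?new = "pal_factors (w @ [a]) - pal_factors w"
  have "card ?new \<le> Suc 0"
    using pal_factors_snoc_new_unique[of _ w a]
    by (subst card_le_Suc0_iff_eq) (auto simp: finite_pal_factors)
  have "card (pal_factors (w @ [a])) \<le> card (?new \<union> pal_factors w)"
    by (rule card_mono) (auto simp: finite_pal_factors)
  also have "\<dots> \<le> card ?new + card (pal_factors w)" by (rule card_Un_le)
  finally show ?thesis using \<open>card ?new \<le> Suc 0\<close> by simp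
qed

lemma pal_factors_rev: "pal_factors (rev w) = rev ` pal_factors w"
proof -
  have "pal_factors (rev w) \<subseteq> rev ` pal_factors w" for w :: "'a list"
    by (auto simp: pal_factors_def palindrome_def factor_eq_sublist image_iff
        sublist_rev_right intro!: exI[of _ "rev _"])
  from this this[of "rev w"] show ?thesis by auto
qed

lemma card_pal_factors_rev: "card (pal_factors (rev w)) = card (pal_factors w)"
  by (simp add: pal_factors_rev card_image)

lemma card_pal_factors_append_right_le:
  "card (pal_factors (f @ q)) \<le> card (pal_factors f) + length q"
proof (induction q rule: rev_induct)
  case (snoc a q)
  then show ?case using card_pal_factors_snoc_le[of "f @ q" a] by simp
qed simp

lemma card_pal_factors_append_le:
  "card (pal_factors (p @ f @ q)) \<le> card (pal_factors f) + length p + length q"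
proof -
  have "card (pal_factors (p @ f @ q)) = card (pal_factors (rev (f @ q) @ rev p))"
    by (metis card_pal_factors_rev rev_append)
  also have "\<dots> \<le> card (pal_factors (f @ q)) + length p"
    using card_pal_factors_append_right_le card_pal_factors_rev by (metis length_rev)
  also have "\<dots> \<le> card (pal_factors f) + length p + length q"
    using card_pal_factors_append_right_le by simp
  finally show ?thesis .
qed

lemma pal_factors_Nil [simp]: "pal_factors [] = {}"
  by (auto simp: pal_factors_def factor_eq_sublist)

lemma card_pal_factors_le_length: "card (pal_factors w) \<le> length w"
  using card_pal_factors_append_le[of "[]" "[]" w] by simp

lemma rich_sublist:
  assumes "rich w" "sublist f w"
  shows "rich f"
proof -
  obtain p q where "w = p @ f @ q" using \<open>sublist f w\<close> by (auto simp: sublist_def)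
  then have "length w \<le> card (pal_factors f) + length p + length q"
    using \<open>rich w\<close> card_pal_factors_append_le unfolding rich_def by metis
  then show ?thesis
    using \<open>w = p @ f @ q\<close> card_pal_factors_le_length[of f] unfolding rich_def by simp
qed

section \<open>A word that is not rich\<close>

definition gap_word :: "'a \<Rightarrow> 'a \<Rightarrow> nat \<Rightarrow> nat \<Rightarrow> 'a list" where
  "gap_word c d x z = [c, c] @ replicate x d @ [c] @ replicate z d @ [c, c]"

lemma length_gap_word [simp]: "length (gap_word c d x z) = x + z + 5"
  by (simp add: gap_word_def)

lemma gap_word_nth_eq_iff:
  assumes "c \<noteq> d" "j < x + z + 5"
  shows "gap_word c d x z ! j = c \<longleftrightarrow> j \<in> {0, 1, x + 2, x + z + 3, x + z + 4}"
  using assms by (auto simp: gap_word_def nth_append nth_Cons')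

lemma not_palindrome_gap_word:
  assumes "c \<noteq> d" "x \<noteq> z"
  shows "\<not> palindrome (gap_word c d x z)"
proof
  let ?f = "gap_word c d x z"
  assume "palindrome ?f"
  then have "?f ! (x + 2) = rev ?f ! (x + 2)" by (metis palindrome_def)
  also have "\<dots> = ?f ! (z + 2)" by (simp add: rev_nth)
  finally show False
    using gap_word_nth_eq_iff[of c d "x + 2" x z] gap_word_nth_eq_iff[of c d "z + 2" x z] assms
    by auto
qed

(* Such a suffix starts with c c, which occurs in the word only at positions 0 and x + z + 3. *)
lemma palindrome_suffix_gap_word:
  assumes "c \<noteq> d" "0 < x" "0 < z"
    and "palindrome u" "suffix u (gap_word c d x z)" "3 \<le> length u"
  shows "u = gap_word c d x z"
proof -
  let ?f = "gap_word c d x z"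
  obtain r where r: "?f = r @ u" using \<open>suffix u ?f\<close> by (auto elim: suffixE)
  have len: "length ?f = length r + length u" using r by (metis length_append)
  have mirror: "?f ! (length r + k) = ?f ! (length ?f - Suc k)" if "k < length u" for k
  proof -
    have shift: "?f ! (length r + j) = u ! j" for j by (metis r nth_append_length_plus)
    have "u ! k = u ! (length u - Suc k)"
      using that \<open>palindrome u\<close> rev_nth unfolding palindrome_def by metis
    moreover have "length ?f - Suc k = length r + (length u - Suc k)" using that len by simp
    ultimately show ?thesis by (simp only: shift)
  qed
  have "0 < length u" "1 < length u" using \<open>3 \<le> length u\<close> by linarith+
  then have "?f ! length r = c" "?f ! (length r + 1) = c"
    using mirror[of 0] mirror[of 1] gap_word_nth_eq_iff[OF \<open>c \<noteq> d\<close>, of "length ?f - 1" x z]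
      gap_word_nth_eq_iff[OF \<open>c \<noteq> d\<close>, of "length ?f - 2" x z]
    by simp_all
  moreover have "length r + 1 < x + z + 5" using \<open>3 \<le> length u\<close> len by simp
  ultimately have "length r \<in> {0, 1, x + 2, x + z + 3, x + z + 4}"
    "length r + 1 \<in> {0, 1, x + 2, x + z + 3, x + z + 4}"
    using gap_word_nth_eq_iff[OF \<open>c \<noteq> d\<close>, of _ x z] by auto
  then have "r = []" using \<open>3 \<le> length u\<close> len assms(2,3) by auto
  then show ?thesis using r by simp
qed

lemma pal_factors_gap_word:
  assumes "c \<noteq> d" "x \<noteq> z" "0 < x" "0 < z"
  shows "pal_factors (gap_word c d x z) \<subseteq> pal_factors (butlast (gap_word c d x z))"
proof
  let ?g = "[c, c] @ replicate x d @ [c] @ replicate z d @ [c]"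
  have f: "gap_word c d x z = ?g @ [c]" by (simp add: gap_word_def)
  then have g: "butlast (gap_word c d x z) = ?g" by (simp only: butlast_snoc)
  fix u assume u: "u \<in> pal_factors (gap_word c d x z)"
  have "sublist u ?g"
  proof (rule ccontr)
    assume "\<not> sublist u ?g"
    then have "suffix u (gap_word c d x z)"
      using u sublist_snoc[of u ?g c] by (auto simp: f pal_factors_def factor_eq_sublist)
    moreover have "length u < 3"
      using palindrome_suffix_gap_word[OF assms(1,3,4)] not_palindrome_gap_word[OF assms(1,2)]
        \<open>suffix u _\<close> u
      by (force simp: pal_factors_def)
    moreover have "suffix [c, c] (gap_word c d x z)"
      unfolding gap_word_def suffix_def by (metis append.assoc)
    ultimately have "suffix u [c, c]" by (auto intro: suffix_length_suffix)
    then have "u = [c] \<or> u = [c, c]" using u by (auto simp: pal_factors_def suffix_Cons)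
    then show False using \<open>\<not> sublist u ?g\<close> by auto
  qed
  then show "u \<in> pal_factors (butlast (gap_word c d x z))"
    using u by (simp only: g) (simp add: pal_factors_def factor_eq_sublist)
qed

lemma not_rich_gap_word:
  assumes "c \<noteq> d" "x \<noteq> z" "0 < x" "0 < z"
  shows "\<not> rich (gap_word c d x z)"
proof -
  let ?f = "gap_word c d x z"
  have "card (pal_factors ?f) \<le> card (pal_factors (butlast ?f))"
    using pal_factors_gap_word[OF assms] by (simp add: card_mono finite_pal_factors)
  also have "\<dots> < length ?f"
    using card_pal_factors_le_length[of "butlast ?f"] by simp
  finally show ?thesis by (simp add: rich_def)
qed

section \<open>Block reversals of binary words with nine runs\<close>

lemma concat_rev_in_block_reversal:
  assumes "concat bs = w" "w \<noteq> []"
  shows "concat (rev bs) \<in> block_reversal w"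
proof -
  let ?bs = "filter (\<lambda>b. b \<noteq> []) bs"
  have concat_filter: "concat (filter (\<lambda>b. b \<noteq> []) cs) = concat cs" for cs :: "'a list list"
    by (induction cs) auto
  have "concat ?bs = w" "concat (rev ?bs) = concat (rev bs)"
    using assms(1) concat_filter by (simp_all add: rev_filter)
  moreover have "?bs \<noteq> []" using \<open>concat ?bs = w\<close> \<open>w \<noteq> []\<close> by auto
  ultimately show ?thesis
    unfolding block_reversal_def by (intro CollectI exI[of _ ?bs]) auto
qed

lemma gap_word_in_block_reversal_not_rich:
  assumes "concat bs = w" "w \<noteq> []" "concat (rev bs) = X @ gap_word c d x z @ Y"
    and "c \<noteq> d" "x \<noteq> z" "0 < x" "0 < z"
  shows "\<exists>v\<in>block_reversal w. \<not> rich v"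
  using concat_rev_in_block_reversal[OF assms(1,2)] not_rich_gap_word[OF assms(4-7)]
    rich_sublist[of "concat (rev bs)" "gap_word c d x z"] assms(3)
  by auto

lemma runs_prefix_decomposition:
  assumes "k \<le> length (remdups_adj w)"
  shows "\<exists>ns r. length ns = k \<and> (\<forall>n\<in>set ns. 0 < n)
    \<and> w = concat (map2 replicate ns (take k (remdups_adj w))) @ r"
  using assms
proof (induction k arbitrary: w)
  case 0
  show ?case by (intro exI[of _ "[]"] exI[of _ w]) simp
next
  case (Suc k)
  then obtain x xs where w: "w = x # xs" by (cases w) auto
  define rest where "rest = dropWhile (\<lambda>y. y = x) xs"
  define n where "n = Suc (length (takeWhile (\<lambda>y. y = x) xs))"
  have "\<forall>y\<in>set (takeWhile (\<lambda>y. y = x) xs). y = x" by (auto dest: set_takeWhileD)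
  then have "takeWhile (\<lambda>y. y = x) xs = replicate (n - 1) x"
    unfolding n_def by (simp add: replicate_length_same)
  then have w_split: "w = replicate n x @ rest"
    using takeWhile_dropWhile_id[of "\<lambda>y. y = x" xs] by (simp add: w n_def rest_def)
  have runs: "remdups_adj w = x # remdups_adj rest"
    by (simp add: w rest_def remdups_adj_Cons')
  then obtain ns r where "length ns = k" "\<forall>n\<in>set ns. 0 < n"
    "rest = concat (map2 replicate ns (take k (remdups_adj rest))) @ r"
    using Suc.IH[of rest] Suc.prems by auto
  then show ?case
    using w_split runs by (intro exI[of _ "n # ns"] exI[of _ r]) (simp add: n_def)
qed

lemma remdups_adj_nth_two_letters:
  assumes "set w = {c, d}" "c \<noteq> d" "hd w = c" "i < length (remdups_adj w)"
  shows "remdups_adj w ! i = (if even i then c else d)"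
  using assms(4)
proof (induction i)
  case 0
  then show ?case using assms(3) by (simp add: hd_conv_nth[symmetric])
next
  case (Suc i)
  have "remdups_adj w ! Suc i \<noteq> remdups_adj w ! i" "remdups_adj w ! Suc i \<in> {c, d}"
    using remdups_adj_adjacent[OF Suc.prems] nth_mem[OF Suc.prems] assms(1) by auto
  then show ?case using Suc assms(2) by auto
qed

lemma binary_word_nine_runs:
  assumes "binary_word w" "9 \<le> run_length w"
  obtains c d P S p1 p2 p3 p4 q1 q2 q3
  where "c \<noteq> d" "0 < p1" "0 < p2" "0 < p3" "0 < p4" "0 < q1" "0 < q2" "0 < q3"
    and "w = P @ [c] @ replicate p1 d @ replicate q1 c @ replicate p2 d @ replicate q2 c
              @ replicate p3 d @ replicate q3 c @ replicate p4 d @ [c] @ S"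
proof -
  have "w \<noteq> []" using assms(2) by (auto simp: run_length_def)
  obtain c d where letters: "set w = {c, d}" "c \<noteq> d" "hd w = c"
  proof -
    obtain x y where "set w = {x, y}" "x \<noteq> y"
      using assms(1) by (auto simp: binary_word_def card_2_iff)
    moreover have "hd w \<in> set w" using \<open>w \<noteq> []\<close> by simp
    ultimately show ?thesis using that by (metis insert_commute insertE singletonD)
  qed
  have "take 9 (remdups_adj w) = map (\<lambda>i. if even i then c else d) [0..<9]"
    using remdups_adj_nth_two_letters[OF letters] assms(2)
    by (intro nth_equalityI) (auto simp: run_length_def)
  then have runs: "take 9 (remdups_adj w) = [c, d, c, d, c, d, c, d, c]"
    by (simp add: upt_rec)
  obtain ns r where ns: "length ns = 9" "\<forall>n\<in>set ns. 0 < n"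
    and w: "w = concat (map2 replicate ns (take 9 (remdups_adj w))) @ r"
    using runs_prefix_decomposition assms(2) unfolding run_length_def by blast
  obtain n1 n2 n3 n4 n5 n6 n7 n8 n9 where "ns = [n1, n2, n3, n4, n5, n6, n7, n8, n9]"
    using ns(1) by (auto simp: numeral_eq_Suc length_Suc_conv)
  then have "w = replicate n1 c @ replicate n2 d @ replicate n3 c @ replicate n4 d @ replicate n5 c
      @ replicate n6 d @ replicate n7 c @ replicate n8 d @ replicate n9 c @ r"
    and pos: "0 < n1" "0 < n2" "0 < n3" "0 < n4" "0 < n5" "0 < n6" "0 < n7" "0 < n8" "0 < n9"
    using w runs ns(2) by simp_all
  moreover obtain m1 m9 where "n1 = Suc m1" "n9 = Suc m9"
    using pos(1,9) gr0_implies_Suc by metis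
  ultimately have "w = replicate m1 c @ [c] @ replicate n2 d @ replicate n3 c @ replicate n4 d
      @ replicate n5 c @ replicate n6 d @ replicate n7 c @ replicate n8 d @ [c] @ replicate m9 c @ r"
    by (simp add: replicate_append_same[symmetric])
  then show ?thesis by (rule that[OF letters(2) pos(2,4,6,8,3,5,7)])
qed

lemma block_reversal_nine_runs_not_rich:
  assumes "c \<noteq> d" and pos: "0 < p1" "0 < p2" "0 < p3" "0 < p4" "0 < q1" "0 < q2" "0 < q3"
    and w: "w = P @ [c] @ replicate p1 d @ replicate q1 c @ replicate p2 d @ replicate q2 c
              @ replicate p3 d @ replicate q3 c @ replicate p4 d @ [c] @ S"
  shows "\<exists>v\<in>block_reversal w. \<not> rich v"
proof -
  have "w \<noteq> []" using w by simp
  obtain b e where q1: "q1 = Suc b" and q2: "q2 = Suc e" using pos(5,6) gr0_implies_Suc by metis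
  consider (long_neq) a where "q3 = Suc (Suc a)" "p4 \<noteq> p1"
    | (long_eq) a where "q3 = Suc (Suc a)" "p4 = p1"
    | (short_neq) "q3 = 1" "p3 \<noteq> p1 + p2"
    | (short_eq) "q3 = 1" "p3 = p1 + p2"
    using pos(7) by (cases q3; cases "q3 - 1") auto
  then show ?thesis
  proof cases
    case (long_neq a)
    let ?bs = "[P, [c], replicate p1 d @ replicate q1 c, replicate p2 d @ replicate q2 c
      @ replicate p3 d @ replicate q3 c @ replicate p4 d @ [c], S]"
    have split: "concat (rev ?bs) = (S @ replicate p2 d @ replicate q2 c @ replicate p3 d @ replicate a c)
        @ gap_word c d p4 p1 @ (replicate b c @ P)"
      unfolding gap_word_def long_neq(1) q1 by (simp add: replicate_app_Cons_same)
    have blocks: "concat ?bs = w" using w by simp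
    show ?thesis
      using gap_word_in_block_reversal_not_rich[OF blocks \<open>w \<noteq> []\<close> split \<open>c \<noteq> d\<close>] long_neq(2) pos
      by simp
  next
    case (long_eq a)
    let ?bs = "[P, [c], replicate p1 d @ replicate q1 c, replicate p2 d, replicate q2 c
      @ replicate p3 d @ replicate q3 c @ replicate p4 d @ [c], S]"
    have split: "concat (rev ?bs) = (S @ replicate q2 c @ replicate p3 d @ replicate a c)
        @ gap_word c d p4 (p2 + p1) @ (replicate b c @ P)"
      unfolding gap_word_def long_eq(1) q1 by (simp add: replicate_app_Cons_same replicate_add)
    have blocks: "concat ?bs = w" using w by simp
    have "p4 \<noteq> p2 + p1" using long_eq(2) pos(2) by simp
    then show ?thesis
      using gap_word_in_block_reversal_not_rich[OF blocks \<open>w \<noteq> []\<close> split \<open>c \<noteq> d\<close>] pos by simp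
  next
    case short_neq
    let ?bs = "[P, [c], replicate p1 d @ replicate q1 c, replicate p2 d,
      replicate q2 c @ replicate p3 d @ replicate q3 c, replicate p4 d @ [c], S]"
    have split: "concat (rev ?bs) = (S @ replicate p4 d @ replicate e c)
        @ gap_word c d p3 (p2 + p1) @ (replicate b c @ P)"
      unfolding gap_word_def short_neq(1) q1 q2 by (simp add: replicate_app_Cons_same replicate_add)
    have blocks: "concat ?bs = w" using w by simp
    have "p3 \<noteq> p2 + p1" using short_neq(2) by simp
    then show ?thesis
      using gap_word_in_block_reversal_not_rich[OF blocks \<open>w \<noteq> []\<close> split \<open>c \<noteq> d\<close>] pos by simp
  next
    case short_eq
    let ?bs = "[P, [c], replicate p1 d @ replicate q1 c, replicate p2 d,
      replicate q2 c @ replicate p3 d @ replicate q3 c @ replicate p4 d, [c], S]"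
    have split: "concat (rev ?bs) = (S @ replicate e c)
        @ gap_word c d p3 (p4 + p2 + p1) @ (replicate b c @ P)"
      unfolding gap_word_def short_eq(1) q1 q2 by (simp add: replicate_app_Cons_same replicate_add)
    have blocks: "concat ?bs = w" using w by simp
    have "p3 \<noteq> p4 + p2 + p1" using short_eq(2) pos(4) by simp
    then show ?thesis
      using gap_word_in_block_reversal_not_rich[OF blocks \<open>w \<noteq> []\<close> split \<open>c \<noteq> d\<close>] pos by simp
  qed
qed

theorem mainTheorem2:
  fixes w :: "'a list" and \<Sigma> :: "'a set"
  assumes "card \<Sigma> = 2"
    and "set w \<subseteq> \<Sigma>"
    and "binary_word w"
    and "\<forall>v\<in>block_reversal w. rich v"
  shows "2 \<le> run_length w \<and> run_length w \<le> 8"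
proof
  have "card (set (remdups_adj w)) \<le> length (remdups_adj w)" by (rule card_length)
  then show "2 \<le> run_length w"
    using assms(3) by (simp add: binary_word_def run_length_def)
  show "run_length w \<le> 8"
  proof (rule ccontr)
    assume "\<not> run_length w \<le> 8"
    then have "9 \<le> run_length w" by simp
    then obtain c d P S p1 p2 p3 p4 q1 q2 q3
      where "c \<noteq> d" "0 < p1" "0 < p2" "0 < p3" "0 < p4" "0 < q1" "0 < q2" "0 < q3"
        and "w = P @ [c] @ replicate p1 d @ replicate q1 c @ replicate p2 d @ replicate q2 c
              @ replicate p3 d @ replicate q3 c @ replicate p4 d @ [c] @ S"
      by (rule binary_word_nine_runs[OF assms(3)])
    from block_reversal_nine_runs_not_rich[OF this] show False using assms(4) by blast
  qed
qed

end
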